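(* Let $n\ge2$, $0\le\delta<\frac1n$, let $P^0=[d_1\ \cdots\ d_{n+1}]$ be the canonical uniform simplex, and let $P^\delta=[d_1^\delta\ \cdots\ d^\delta_{n+1}]$ with $d_1^\delta=d_1$ and $d_i^\delta=\alpha(d_i+\delta e_1)$ for $2\le i\le n+1$, where $$\alpha=\frac{n}{\sqrt{n^2\delta^2-2n\delta+n^2}},\qquad \beta=\alpha^2\left(\frac{n\delta^2-2\delta-1}{n}\right),\qquad \gamma=-\alpha(1-\delta n)-(n-1).$$ Then: (i) $\alpha=\frac{1}{\|d_i+\delta e_1\|}$ for all $i\in\{2,\dots,n+1\}$; (ii) $\beta=(d_j^\delta)^\top d_k^\delta$ for all $2\le j,k\le n+1$ with $j\ne k$; (iii) $\beta\le-\frac1n$ and $1+\frac{\beta n}{1-\beta}>0$; (iv) $-n\le\gamma<0$.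
   Context: The canonical uniform simplex is the $n\times(n+1)$ matrix $P^0$ defined as follows, with $a_i=\sqrt{\frac{(n-i+1)(n+1)}{n(n-i+2)}}$ for $i=1,\dots,n$: for $1\le j\le n$, column $j$ has entry $-\frac{a_i}{n-i+1}$ in row $i<j$, entry $a_j$ in row $j$, and $0$ in rows $i>j$; column $n+1$ has entry $-\frac{a_i}{n-i+1}$ in every row $i$. $e_1$ is the first standard basis vector. *)

theory Defs
  imports "HOL-Analysis.Analysis"
begin

text \<open>Vectors of R^n are represented as functions nat => real, with components indexed by 1..n.\<close>

definition vinner :: "nat \<Rightarrow> (nat \<Rightarrow> real) \<Rightarrow> (nat \<Rightarrow> real) \<Rightarrow> real" where
  "vinner n x y = (\<Sum>r=1..n. x r * y r)"

definition vnorm :: "nat \<Rightarrow> (nat \<Rightarrow> real) \<Rightarrow> real" where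
  "vnorm n x = sqrt (vinner n x x)"

definition e1 :: "nat \<Rightarrow> real" where
  "e1 r = (if r = 1 then 1 else 0)"

definition simplex_a :: "nat \<Rightarrow> nat \<Rightarrow> real" where
  "simplex_a n i = sqrt ((real n - real i + 1) * (real n + 1) / (real n * (real n - real i + 2)))"

definition P0 :: "nat \<Rightarrow> nat \<Rightarrow> nat \<Rightarrow> real" where
  "P0 n i j =
     (if 1 \<le> i \<and> i \<le> n \<and> 1 \<le> j \<and> j \<le> n + 1 then
        (if j \<le> n then
           (if i < j then - simplex_a n i / (real n - real i + 1)
            else if i = j then simplex_a n j else 0)
         else - simplex_a n i / (real n - real i + 1))
      else 0)"

definition dcol :: "nat \<Rightarrow> nat \<Rightarrow> (nat \<Rightarrow> real)" where
  "dcol n j = (\<lambda>r. P0 n r j)"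

definition simplex_alpha :: "nat \<Rightarrow> real \<Rightarrow> real" where
  "simplex_alpha n \<delta> = real n / sqrt (real n ^ 2 * \<delta> ^ 2 - 2 * real n * \<delta> + real n ^ 2)"

definition dcol_delta :: "nat \<Rightarrow> real \<Rightarrow> nat \<Rightarrow> (nat \<Rightarrow> real)" where
  "dcol_delta n \<delta> j = (if j = 1 then dcol n 1
                        else (\<lambda>r. simplex_alpha n \<delta> * (dcol n j r + \<delta> * e1 r)))"

end

theory Submission
  imports Defs
begin

(* The columns of P^0 are the vertices of a regular simplex: unit vectors with pairwise inner
   products -1/n. This is a telescoping computation, since (a_i/(n-i+1))^2 =
   (n+1)/n (1/(n-i+1) - 1/(n-i+2)). All columns d_2, ..., d_(n+1) have first entry -1/n, so
   shifting them by \<delta> e_1 adds the same amount -2\<delta>/n + \<delta>^2 to every entry of their Gram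
   matrix; this gives (i) and (ii). What remains are real inequalities in D = n\<delta>^2 - 2\<delta>,
   which lies in (-1/n, 0] for 0 \<le> \<delta> < 1/n; e.g. \<beta> = (D - 1)/(D + n). *)

definition simplex_offdiag :: "nat \<Rightarrow> nat \<Rightarrow> real" where
  "simplex_offdiag n i = simplex_a n i / (real n - real i + 1)"

lemma P0_eq:
  assumes "1 \<le> r" "r \<le> n" "1 \<le> j" "j \<le> n + 1"
  shows "P0 n r j = (if r < j then - simplex_offdiag n r else if r = j then simplex_a n j else 0)"
  using assms unfolding P0_def simplex_offdiag_def by auto

lemma P0_eq_0_below: "j < r \<Longrightarrow> P0 n r j = 0"
  unfolding P0_def by auto

lemma P0_last_row_eq_0: "P0 n (Suc n) j = 0"
  unfolding P0_def by auto

lemma simplex_a_sq: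
  assumes "1 \<le> i" "i \<le> n"
  shows "simplex_a n i ^ 2 = (real n + 1) / real n * (1 - 1 / (real n - real i + 2))"
proof -
  define m where "m = real n - real i + 1"
  have m: "m > 0" "real n > 0" using assms by (auto simp: m_def)
  have "simplex_a n i ^ 2 = m * (real n + 1) / (real n * (m + 1))"
    using m unfolding simplex_a_def m_def
    by (simp add: add.assoc zero_le_divide_iff zero_le_mult_iff)
  also have "\<dots> = (real n + 1) / real n * (1 - 1 / (m + 1))"
    using m by (simp add: divide_simps)
  finally show ?thesis by (simp add: m_def add.assoc)
qed

lemma simplex_a_mult_offdiag:
  assumes "1 \<le> i" "i \<le> n"
  shows "simplex_a n i * simplex_offdiag n i = (real n + 1) / real n * (1 / (real n - real i + 2))"
proof -
  define m where "m = real n - real i + 1"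
  have m: "m > 0" "real n > 0" using assms by (auto simp: m_def)
  have "simplex_a n i * simplex_offdiag n i = (real n + 1) / real n * (1 - 1 / (m + 1)) / m"
    using simplex_a_sq[OF assms]
    by (simp add: simplex_offdiag_def m_def power2_eq_square add.assoc)
  also have "\<dots> = (real n + 1) / real n * (1 / (m + 1))"
    using m by (simp add: divide_simps)
  finally show ?thesis by (simp add: m_def add.assoc)
qed

lemma simplex_offdiag_sq:
  assumes "1 \<le> i" "i \<le> n"
  shows "simplex_offdiag n i ^ 2
       = (real n + 1) / real n * (1 / (real n - real i + 1) - 1 / (real n - real i + 2))"
proof -
  define m where "m = real n - real i + 1"
  have m: "m > 0" "real n > 0" using assms by (auto simp: m_def)
  have "simplex_offdiag n i ^ 2 = (real n + 1) / real n * (1 - 1 / (m + 1)) / m ^ 2"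
    using simplex_a_sq[OF assms]
    by (simp add: simplex_offdiag_def m_def power_divide add.assoc)
  also have "\<dots> = (real n + 1) / real n * (1 / m - 1 / (m + 1))"
    using m by (simp add: divide_simps) (simp add: algebra_simps power2_eq_square)
  finally show ?thesis by (simp add: m_def add.assoc)
qed

lemma sum_simplex_offdiag_sq:
  assumes "1 \<le> j" "j \<le> n + 1"
  shows "(\<Sum>r=1..<j. simplex_offdiag n r ^ 2)
       = (real n + 1) / real n * (1 / (real n - real j + 2) - 1 / (real n + 1))"
  using assms
proof (induction j rule: nat_induct_at_least)
  case base
  then show ?case by simp
next
  case (Suc j)
  then have "(\<Sum>r=1..<Suc j. simplex_offdiag n r ^ 2)
      = (real n + 1) / real n * (1 / (real n - real j + 2) - 1 / (real n + 1))
      + (real n + 1) / real n * (1 / (real n - real j + 1) - 1 / (real n - real j + 2))"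
    by (simp add: simplex_offdiag_sq)
  then show ?case by (simp add: algebra_simps)
qed

lemma vinner_commute: "vinner n x y = vinner n y x"
  unfolding vinner_def by (simp add: mult.commute)

(* For j = n + 1 the last summand vanishes: P0 is 0 outside its index range. *)
lemma vinner_P0_columns:
  assumes "1 \<le> j" "j \<le> k" "k \<le> n + 1"
  shows "vinner n (dcol n j) (dcol n k)
       = (\<Sum>r=1..<j. simplex_offdiag n r ^ 2) + P0 n j j * P0 n j k"
proof -
  have "vinner n (dcol n j) (dcol n k) = (\<Sum>r=1..Suc n. P0 n r j * P0 n r k)"
    by (simp add: vinner_def dcol_def P0_last_row_eq_0)
  also have "\<dots> = (\<Sum>r=1..j. P0 n r j * P0 n r k)"
    by (rule sum.mono_neutral_right) (use assms in \<open>auto simp: P0_eq_0_below\<close>)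
  also have "\<dots> = (\<Sum>r=1..<j. P0 n r j * P0 n r k) + P0 n j j * P0 n j k"
    using assms by (simp add: atLeastLessThanSuc_atLeastAtMost[symmetric] sum.atLeastLessThan_Suc)
  also have "(\<Sum>r=1..<j. P0 n r j * P0 n r k) = (\<Sum>r=1..<j. simplex_offdiag n r ^ 2)"
    by (rule sum.cong) (use assms in \<open>auto simp: P0_eq power2_eq_square\<close>)
  finally show ?thesis .
qed

lemma P0_gram:
  assumes "1 \<le> n" "j \<in> {1..n+1}" "k \<in> {1..n+1}"
  shows "vinner n (dcol n j) (dcol n k) = (if j = k then 1 else - 1 / real n)"
proof -
  have n: "real n > 0" using assms(1) by simp
  have sum_to_one: "(real n + 1) / real n * (1 - 1 / (real n + 1)) = 1"
    using n by (simp add: divide_simps)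
  have diag: "vinner n (dcol n j) (dcol n j) = 1" if "j \<in> {1..n+1}" for j
  proof (cases "j = n + 1")
    case True
    then show ?thesis
      using vinner_P0_columns[of j j n] sum_simplex_offdiag_sq[of j n] sum_to_one
      by (simp add: P0_last_row_eq_0)
  next
    case False
    then have j: "1 \<le> j" "j \<le> n" using that by auto
    have "vinner n (dcol n j) (dcol n j) = (\<Sum>r=1..<j. simplex_offdiag n r ^ 2) + simplex_a n j ^ 2"
      using vinner_P0_columns[of j j n] j by (simp add: P0_eq power2_eq_square)
    also have "\<dots> = (real n + 1) / real n * (1 - 1 / (real n + 1))"
      using j by (simp only: sum_simplex_offdiag_sq simplex_a_sq) (simp add: algebra_simps)
    finally show ?thesis using sum_to_one by simp
  qed
  have off: "vinner n (dcol n j) (dcol n k) = - 1 / real n"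
    if "j \<in> {1..n+1}" "k \<in> {1..n+1}" "j < k" for j k
  proof -
    have j: "1 \<le> j" "j \<le> n" using that by auto
    have "vinner n (dcol n j) (dcol n k)
        = (\<Sum>r=1..<j. simplex_offdiag n r ^ 2) - simplex_a n j * simplex_offdiag n j"
      using vinner_P0_columns[of j k n] that by (simp add: P0_eq)
    also have "\<dots> = - ((real n + 1) / real n * (1 / (real n + 1)))"
      using j by (simp only: sum_simplex_offdiag_sq simplex_a_mult_offdiag) (simp add: algebra_simps)
    finally show ?thesis using n by (simp add: divide_simps)
  qed
  show ?thesis
  proof (cases j k rule: linorder_cases)
    case greater
    then show ?thesis using off[of k j] assms by (simp add: vinner_commute)
  qed (use diag[of j] off[of j k] assms in simp_all)
qed

lemma dcol_first_row:
  assumes "2 \<le> j" "j \<le> n + 1"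
  shows "dcol n j 1 = - 1 / real n"
proof -
  have "simplex_a n 1 = 1"
    using assms unfolding simplex_a_def by simp
  then show ?thesis
    using assms by (simp add: dcol_def P0_eq simplex_offdiag_def)
qed

lemma sum_mult_e1: "1 \<le> n \<Longrightarrow> (\<Sum>r=1..n. x r * e1 r) = x 1"
  unfolding e1_def by (simp add: if_distrib cong: if_cong)

lemma vinner_shift_e1:
  assumes "1 \<le> n"
  shows "vinner n (\<lambda>r. x r + d * e1 r) (\<lambda>r. y r + d * e1 r) = vinner n x y + d * (x 1 + y 1) + d\<^sup>2"
proof -
  have "vinner n (\<lambda>r. x r + d * e1 r) (\<lambda>r. y r + d * e1 r)
      = (\<Sum>r=1..n. x r * y r + d * (x r * e1 r) + d * (y r * e1 r) + d\<^sup>2 * e1 r)"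
    unfolding vinner_def by (rule sum.cong) (auto simp: e1_def power2_eq_square algebra_simps)
  also have "\<dots> = vinner n x y + d * x 1 + d * y 1 + d\<^sup>2 * 1"
    using sum_mult_e1[OF assms, of "\<lambda>_. 1"]
    by (simp only: sum.distrib sum_distrib_left[symmetric] sum_mult_e1[OF assms] vinner_def mult_1)
  finally show ?thesis by (simp add: algebra_simps)
qed

lemma vinner_scale: "vinner n (\<lambda>r. s * x r) (\<lambda>r. s * y r) = s\<^sup>2 * vinner n x y"
  unfolding vinner_def by (simp add: sum_distrib_left power2_eq_square algebra_simps)

lemma vinner_shifted_columns:
  assumes "j \<in> {2..n+1}" "k \<in> {2..n+1}"
  shows "vinner n (\<lambda>r. dcol n j r + \<delta> * e1 r) (\<lambda>r. dcol n k r + \<delta> * e1 r)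
       = (if j = k then 1 else - 1 / real n) - 2 * \<delta> / real n + \<delta>\<^sup>2"
  using assms vinner_shift_e1[of n "dcol n j" \<delta> "dcol n k"] P0_gram[of n j k]
    dcol_first_row[of j n] dcol_first_row[of k n]
  by auto

lemma simplex_alpha_eq:
  assumes "n > 0"
  shows "simplex_alpha n \<delta> = 1 / sqrt (1 - 2 * \<delta> / real n + \<delta>\<^sup>2)"
proof -
  have "real n ^ 2 * \<delta> ^ 2 - 2 * real n * \<delta> + real n ^ 2 = real n ^ 2 * (1 - 2 * \<delta> / real n + \<delta>\<^sup>2)"
    using assms by (simp add: field_simps power2_eq_square)
  then show ?thesis
    using assms by (simp add: simplex_alpha_def real_sqrt_mult)
qed

lemma simplex_alpha_sq:
  assumes "n \<ge> 1"
  shows "simplex_alpha n \<delta> ^ 2 = real n / (real n * \<delta>\<^sup>2 - 2 * \<delta> + real n)"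
proof -
  define R where "R = real n ^ 2 * \<delta> ^ 2 - 2 * real n * \<delta> + real n ^ 2"
  have "R = (real n * \<delta> - 1)\<^sup>2 + (real n ^ 2 - 1)"
    by (simp add: R_def power2_eq_square algebra_simps)
  moreover have "(real n * \<delta> - 1)\<^sup>2 \<ge> 0" "real n ^ 2 \<ge> 1"
    using assms by simp_all
  ultimately have "R \<ge> 0"
    by linarith
  then have "simplex_alpha n \<delta> ^ 2 = real n ^ 2 / R"
    by (simp add: simplex_alpha_def R_def power_divide)
  also have "R = real n * (real n * \<delta>\<^sup>2 - 2 * \<delta> + real n)"
    by (simp add: R_def power2_eq_square algebra_simps)
  finally show ?thesis
    using assms by (simp add: power2_eq_square)
qed

lemma simplex_beta_bounds:
  fixes N \<delta> :: real
  assumes "N \<ge> 2" "0 \<le> \<delta>" "\<delta> * N < 1"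
  defines "\<beta> \<equiv> (N * \<delta>\<^sup>2 - 2 * \<delta> - 1) / (N * \<delta>\<^sup>2 - 2 * \<delta> + N)"
  shows "\<beta> \<le> - 1 / N" "1 + \<beta> * N / (1 - \<beta>) > 0"
proof -
  define D where "D = N * \<delta>\<^sup>2 - 2 * \<delta>"
  have "D = \<delta> * (N * \<delta> - 2)"
    by (simp add: D_def power2_eq_square algebra_simps)
  moreover have "N * \<delta> - 2 \<le> 0"
    using assms(3) by (simp add: mult.commute)
  ultimately have D_nonpos: "D \<le> 0"
    using assms(2) by (simp add: mult_nonneg_nonpos)
  have "1 + N * D = (N * \<delta> - 1)\<^sup>2"
    by (simp add: D_def power2_eq_square algebra_simps)
  then have ND_pos: "1 + N * D > 0"
    using assms(3) by (simp add: mult.commute)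
  have "N * N \<ge> 2 * 2"
    using assms(1) by (intro mult_mono) auto
  then have "N * (D + N) > 0"
    using ND_pos by (simp add: distrib_left)
  then have DN_pos: "D + N > 0"
    using assms(1) by (simp add: zero_less_mult_iff)
  have \<beta>_eq: "\<beta> = (D - 1) / (D + N)"
    by (simp add: \<beta>_def D_def)
  have "D * (N + 1) \<le> 0"
    using D_nonpos assms(1) by (simp add: mult_nonpos_nonneg)
  then show "\<beta> \<le> - 1 / N"
    using DN_pos assms(1) by (simp add: \<beta>_eq divide_simps algebra_simps)
  have "1 + \<beta> * N / (1 - \<beta>) = (1 + N * D) / (N + 1)"
    using DN_pos assms(1) by (simp add: \<beta>_eq divide_simps) (simp add: algebra_simps)
  then show "1 + \<beta> * N / (1 - \<beta>) > 0"
    using ND_pos assms(1) by simp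
qed

lemma simplex_gamma_bounds:
  fixes N \<delta> :: real
  assumes "N \<ge> 2" "0 \<le> \<delta>" "\<delta> * N < 1"
  defines "\<alpha> \<equiv> N / sqrt (N\<^sup>2 * \<delta>\<^sup>2 - 2 * N * \<delta> + N\<^sup>2)"
  shows "- N \<le> - \<alpha> * (1 - \<delta> * N) - (N - 1)" "- \<alpha> * (1 - \<delta> * N) - (N - 1) < 0"
proof -
  define R where "R = N\<^sup>2 * \<delta>\<^sup>2 - 2 * N * \<delta> + N\<^sup>2"
  have "R - (N * (1 - \<delta> * N))\<^sup>2 = (N\<^sup>2 - 1) * N * \<delta> * (2 - N * \<delta>)"
    by (simp add: R_def power2_eq_square algebra_simps)
  moreover have "N\<^sup>2 \<ge> 1" "2 - N * \<delta> > 0"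
    using assms by (simp_all add: one_le_power mult.commute)
  then have "(N\<^sup>2 - 1) * N * \<delta> * (2 - N * \<delta>) \<ge> 0"
    using assms by simp
  ultimately have le: "N * (1 - \<delta> * N) \<le> sqrt R"
    by (intro real_le_rsqrt) simp
  have pos: "N * (1 - \<delta> * N) > 0"
    using assms by simp
  have sqrt_pos: "sqrt R > 0"
    using le pos by linarith
  have "\<alpha> * (1 - \<delta> * N) = N * (1 - \<delta> * N) / sqrt R"
    by (simp add: \<alpha>_def R_def)
  then have "0 < \<alpha> * (1 - \<delta> * N)" "\<alpha> * (1 - \<delta> * N) \<le> 1"
    using divide_pos_pos[OF pos sqrt_pos] divide_le_eq_1_pos[OF sqrt_pos] le by simp_all
  then show "- N \<le> - \<alpha> * (1 - \<delta> * N) - (N - 1)" "- \<alpha> * (1 - \<delta> * N) - (N - 1) < 0"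
    using assms(1) by simp_all
qed

theorem lemma9:
  fixes n :: nat and \<delta> :: real
  assumes "n \<ge> 2" and "0 \<le> \<delta>" and "\<delta> < 1 / real n"
  defines "\<alpha> \<equiv> simplex_alpha n \<delta>"
  defines "\<beta> \<equiv> \<alpha>\<^sup>2 * ((real n * \<delta>\<^sup>2 - 2 * \<delta> - 1) / real n)"
  defines "\<gamma> \<equiv> - \<alpha> * (1 - \<delta> * real n) - (real n - 1)"
  shows "(\<forall>i\<in>{2..n+1}. \<alpha> = 1 / vnorm n (\<lambda>r. dcol n i r + \<delta> * e1 r))
       \<and> (\<forall>j\<in>{2..n+1}. \<forall>k\<in>{2..n+1}. j \<noteq> k \<longrightarrow>
             \<beta> = vinner n (dcol_delta n \<delta> j) (dcol_delta n \<delta> k))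
       \<and> \<beta> \<le> - 1 / real n \<and> 1 + \<beta> * real n / (1 - \<beta>) > 0
       \<and> - real n \<le> \<gamma> \<and> \<gamma> < 0"
proof -
  have n: "1 \<le> n" "real n \<ge> 2" "\<delta> * real n < 1"
    using assms(1,3) by (auto simp: field_simps)
  have norms: "\<alpha> = 1 / vnorm n (\<lambda>r. dcol n i r + \<delta> * e1 r)" if "i \<in> {2..n+1}" for i
    using vinner_shifted_columns[OF that that] n by (simp add: vnorm_def \<alpha>_def simplex_alpha_eq)
  have "- 1 / real n - 2 * \<delta> / real n + \<delta>\<^sup>2 = (real n * \<delta>\<^sup>2 - 2 * \<delta> - 1) / real n"
    using n by (simp add: field_simps)
  then have inner: "\<beta> = vinner n (dcol_delta n \<delta> j) (dcol_delta n \<delta> k)"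
    if "j \<in> {2..n+1}" "k \<in> {2..n+1}" "j \<noteq> k" for j k
    using that vinner_shifted_columns[OF that(1,2), of \<delta>]
    by (simp add: dcol_delta_def vinner_scale \<alpha>_def \<beta>_def)
  have "\<beta> = (real n * \<delta>\<^sup>2 - 2 * \<delta> - 1) / (real n * \<delta>\<^sup>2 - 2 * \<delta> + real n)"
    using n by (simp add: \<beta>_def \<alpha>_def simplex_alpha_sq)
  then have "\<beta> \<le> - 1 / real n \<and> 1 + \<beta> * real n / (1 - \<beta>) > 0"
    using simplex_beta_bounds[OF n(2) assms(2) n(3)] by simp
  moreover have "- real n \<le> \<gamma> \<and> \<gamma> < 0"
    using simplex_gamma_bounds[OF n(2) assms(2) n(3)]
    by (simp add: \<gamma>_def \<alpha>_def simplex_alpha_def)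
  ultimately show ?thesis
    using norms inner by blast
qed

end
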